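(* Let $k\ge3$ be odd, let $G=(V,E)$ be a $k$-uniform power hypergraph, and let $\mathbf x\in\mathbb R^n$ be an H-eigenvector of its Laplacian tensor $\mathcal L$ corresponding to an H-eigenvalue $\lambda>1$. Let $e\in E$. (i) If $e$ has exactly one intersectional vertex $i$ and $x_s\neq0$ for some cored vertex $s\in e$, then $x_ix_s<0$. (ii) If $e$ has exactly two intersectional vertices $i$ and $j$ and $x_s\neq0$ for some cored vertex $s\in e$, then $x_ix_j<0$.
   Context: A $k$-uniform power hypergraph is the $k$-th power $H^k$ of a simple graph $H=(V_H,E_H)$: for each edge $e\in E_H$ add $k-2$ new distinct vertices $i_{e,1},\ldots,i_{e,k-2}$ (different for different edges and not in $V_H$), and take as edges the sets $e\cup\{i_{e,1},\ldots,i_{e,k-2}\}$, $e\in E_H$. For a $k$-uniform hypergraph with vertex set $[n]$, $d_i$ is the number of edges containing $i$; a vertex of degree one is a cored vertex and a vertex of degree larger than one is an intersectional vertex. The Laplacian tensor $\mathcal L=\mathcal D-\mathcal A$ ($\mathcal D$ diagonal with entries $d_i$, $\mathcal A$ with entries $\frac1{(k-1)!}$ at index tuples forming an edge and $0$ otherwise) satisfies $(\mathcal L\mathbf x^{k-1})_i=d_ix_i^{k-1}-\sum_{e\ni i}\prod_{s\in e\setminus\{i\}}x_s$. A real $\lambda$ is an H-eigenvalue with H-eigenvector $\mathbf x\neq0$ if $(\mathcal L\mathbf x^{k-1})_i=\lambda x_i^{k-1}$ for all $i$. *)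

theory Defs
  imports Complex_Main
begin

definition power_hypergraph :: "nat \<Rightarrow> nat \<Rightarrow> nat set set \<Rightarrow> bool" where
  "power_hypergraph n k E \<longleftrightarrow>
     (\<exists>VH EH f.
        VH \<subseteq> {1..n} \<and>
        EH \<subseteq> {e. e \<subseteq> VH \<and> card e = 2} \<and>
        (\<forall>e\<in>EH. f e \<subseteq> {1..n} - VH \<and> card (f e) = k - 2) \<and>
        (\<forall>e\<in>EH. \<forall>e'\<in>EH. e \<noteq> e' \<longrightarrow> f e \<inter> f e' = {}) \<and>
        {1..n} = VH \<union> \<Union>(f ` EH) \<and>
        E = (\<lambda>e. e \<union> f e) ` EH)"

definition degree :: "nat set set \<Rightarrow> nat \<Rightarrow> nat" where
  "degree E i = card {e\<in>E. i \<in> e}"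

definition cored :: "nat set set \<Rightarrow> nat \<Rightarrow> bool" where
  "cored E i \<longleftrightarrow> degree E i = 1"

definition intersectional :: "nat set set \<Rightarrow> nat \<Rightarrow> bool" where
  "intersectional E i \<longleftrightarrow> degree E i > 1"

text \<open>The i-th component of L x^(k-1) for the Laplacian tensor L = D - A.\<close>
definition lap_apply :: "nat set set \<Rightarrow> nat \<Rightarrow> (nat \<Rightarrow> real) \<Rightarrow> nat \<Rightarrow> real" where
  "lap_apply E k x i =
     real (degree E i) * x i ^ (k - 1) - (\<Sum>e\<in>{e\<in>E. i \<in> e}. \<Prod>s\<in>e - {i}. x s)"

definition lap_H_eigenpair :: "nat \<Rightarrow> nat \<Rightarrow> nat set set \<Rightarrow> real \<Rightarrow> (nat \<Rightarrow> real) \<Rightarrow> bool" where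
  "lap_H_eigenpair n k E lam x \<longleftrightarrow>
     (\<exists>i\<in>{1..n}. x i \<noteq> 0) \<and>
     (\<forall>i\<in>{1..n}. lap_apply E k x i = lam * x i ^ (k - 1))"

end

theory Submission
  imports Defs
begin

text \<open>At a cored vertex t of an edge e the eigenvalue equation reads
  \<open>\<Prod>u\<in>e-{t}. x u = (1 - \<lambda>) x t^(k-1)\<close>. Multiplying by x t, the quantity
  \<open>(1 - \<lambda>) x t^k\<close> is the product over the whole edge, so for odd k all cored vertices
  of e carry the same entry c. If c \<noteq> 0, splitting the product at one cored vertex into the
  intersectional vertices I of e and the remaining cored ones, and cancelling powers of c, gives
  \<open>\<Prod>i\<in>I. x i = (1 - \<lambda>) c^|I|\<close>. Since \<lambda> > 1, for |I| = 1 the intersectional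
  entry has the sign opposite to c, and for |I| = 2 the two intersectional entries have opposite signs.\<close>

lemma power_hypergraph_edges_subset:
  assumes "power_hypergraph n k E"
  shows "E \<subseteq> Pow {1..n}"
proof -
  obtain VH EH f where "{1..n} = VH \<union> \<Union>(f ` EH)" "EH \<subseteq> {e. e \<subseteq> VH \<and> card e = 2}"
    "E = (\<lambda>e. e \<union> f e) ` EH"
    using assms unfolding power_hypergraph_def by blast
  then show ?thesis by blast
qed

lemma power_hypergraph_card_edge:
  assumes "power_hypergraph n k E" "k \<ge> 2" "e \<in> E"
  shows "card e = k"
proof -
  obtain VH EH f where H: "EH \<subseteq> {e. e \<subseteq> VH \<and> card e = 2}"
    "\<forall>e\<in>EH. f e \<subseteq> {1..n} - VH \<and> card (f e) = k - 2" "E = (\<lambda>e. e \<union> f e) ` EH"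
    using assms(1) unfolding power_hypergraph_def by blast
  then obtain a where a: "a \<in> EH" "e = a \<union> f a" using assms(3) by blast
  have "finite a" "card a = 2" using a H(1) card.infinite by fastforce+
  moreover have "finite (f a)" using a H(2) by (meson finite_subset finite_Diff finite_atLeastAtMost)
  moreover have "card (f a) = k - 2" using a H(2) by blast
  moreover have "a \<inter> f a = {}" using a H(1,2) by blast
  ultimately show ?thesis using a assms(2) by (simp add: card_Un_disjoint)
qed

lemma not_cored_and_intersectional: "\<not> (cored E v \<and> intersectional E v)"
  unfolding cored_def intersectional_def by auto

lemma cored_if_not_intersectional:
  assumes "finite E" "e \<in> E" "v \<in> e" "\<not> intersectional E v"
  shows "cored E v"
proof -
  have "{e\<in>E. v \<in> e} \<noteq> {}" using assms(2,3) by auto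
  then have "degree E v \<ge> 1" unfolding degree_def using assms(1) by (simp add: Suc_leI card_gt_0_iff)
  then show ?thesis using assms(4) unfolding cored_def intersectional_def by auto
qed

lemma lap_apply_cored:
  assumes "e \<in> E" "t \<in> e" "cored E t"
  shows "lap_apply E k x t = x t ^ (k - 1) - (\<Prod>u\<in>e - {t}. x u)"
proof -
  obtain e' where "{e\<in>E. t \<in> e} = {e'}"
    using assms(3) card_1_singletonE unfolding cored_def degree_def by blast
  with assms(1,2) have "{e\<in>E. t \<in> e} = {e}" by auto
  then show ?thesis using assms(3) unfolding lap_apply_def cored_def by simp
qed

lemma eigenpair_prod_at_cored:
  assumes "lap_H_eigenpair n k E lam x" "e \<in> E" "e \<subseteq> {1..n}" "t \<in> e" "cored E t"
  shows "(\<Prod>u\<in>e - {t}. x u) = (1 - lam) * x t ^ (k - 1)"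
proof -
  have "lap_apply E k x t = lam * x t ^ (k - 1)"
    using assms(1,3,4) unfolding lap_H_eigenpair_def by blast
  then show ?thesis using lap_apply_cored[OF assms(2,4,5)] by (simp add: algebra_simps)
qed

lemma eq_of_prod_remove_odd_power:
  fixes x :: "'a \<Rightarrow> real"
  assumes "finite e" "odd k" "c \<noteq> 0" "s \<in> e" "t \<in> e"
    and "(\<Prod>u\<in>e - {s}. x u) = c * x s ^ (k - 1)"
    and "(\<Prod>u\<in>e - {t}. x u) = c * x t ^ (k - 1)"
  shows "x t = x s"
proof -
  have "c * x v ^ k = (\<Prod>u\<in>e. x u)" if "v \<in> e" "(\<Prod>u\<in>e - {v}. x u) = c * x v ^ (k - 1)" for v
  proof -
    have "k = Suc (k - 1)" using odd_pos[OF \<open>odd k\<close>] by simp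
    then have "x v ^ k = x v * x v ^ (k - 1)" by (metis power_Suc)
    then show ?thesis using prod.remove[OF assms(1) that(1), of x] that(2) by (simp add: algebra_simps)
  qed
  then have "c * x t ^ k = c * x s ^ k" using assms(4-7) by metis
  then have "x t ^ k = x s ^ k" using assms(3) by simp
  then show ?thesis using odd_real_root_unique[OF assms(2)] by metis
qed

lemma eigenpair_prod_intersectional:
  assumes "power_hypergraph n k E" "k \<ge> 3" "odd k"
    and "lap_H_eigenpair n k E lam x" "lam \<noteq> 1"
    and "e \<in> E" "s \<in> e" "cored E s" "x s \<noteq> 0"
  defines "I \<equiv> {v\<in>e. intersectional E v}"
  shows "(\<Prod>v\<in>I. x v) = (1 - lam) * x s ^ card I"
proof -
  have sub: "e \<subseteq> {1..n}" and "finite E"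
    using power_hypergraph_edges_subset[OF assms(1)] assms(6) finite_subset by auto
  have fin: "finite e" using sub finite_subset by blast
  have cardE: "card e = k" using power_hypergraph_card_edge[OF assms(1)] assms(2,6) by simp
  let ?R = "e - I - {s}"
  have same: "x u = x s" if "u \<in> ?R" for u
  proof -
    have "cored E u" using cored_if_not_intersectional[OF \<open>finite E\<close> assms(6)] that by (auto simp: I_def)
    then show ?thesis
      using eq_of_prod_remove_odd_power[OF fin assms(3) _ assms(7), of "1 - lam" u x] that assms(5)
        eigenpair_prod_at_cored[OF assms(4,6) sub] assms(7,8) by auto
  qed
  have "s \<notin> I" using assms(8) not_cored_and_intersectional by (auto simp: I_def)
  then have split: "e - {s} = I \<union> ?R" "I \<inter> ?R = {}" and "I \<subseteq> e - {s}"
    using assms(7) by (auto simp: I_def)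
  have card_rest: "card (e - {s}) = k - 1" using fin cardE assms(7) by simp
  have "?R = (e - {s}) - I" by blast
  then have cardR: "card ?R = (k - 1) - card I"
    using \<open>I \<subseteq> e - {s}\<close> fin card_rest by (simp add: card_Diff_subset finite_subset)
  have "card I \<le> k - 1"
    using \<open>I \<subseteq> e - {s}\<close> fin card_rest by (metis card_mono finite_Diff)
  then have "k - 1 = card I + card ?R" using cardR by simp
  then have pow: "x s ^ (k - 1) = x s ^ card I * x s ^ card ?R"
    by (metis power_add)
  have "(\<Prod>u\<in>e - {s}. x u) = (\<Prod>v\<in>I. x v) * (\<Prod>u\<in>?R. x u)"
    unfolding split(1) using split(2) fin by (intro prod.union_disjoint) (auto simp: I_def)
  then have "(\<Prod>v\<in>I. x v) * x s ^ card ?R = (\<Prod>u\<in>e - {s}. x u)"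
    using same by simp
  also have "\<dots> = (1 - lam) * x s ^ card I * x s ^ card ?R"
    using eigenpair_prod_at_cored[OF assms(4,6) sub assms(7,8)] pow by simp
  finally show ?thesis using assms(9) by simp
qed

theorem corollary4p1:
  fixes n k :: nat and E :: "nat set set" and lam :: real and x :: "nat \<Rightarrow> real" and e :: "nat set"
  assumes "k \<ge> 3" and "odd k"
    and "power_hypergraph n k E"
    and "lap_H_eigenpair n k E lam x"
    and "lam > 1"
    and "e \<in> E"
  shows "(\<forall>i s. {v\<in>e. intersectional E v} = {i} \<and> s \<in> e \<and> cored E s \<and> x s \<noteq> 0
            \<longrightarrow> x i * x s < 0) \<and>
         (\<forall>i j s. {v\<in>e. intersectional E v} = {i, j} \<and> i \<noteq> j \<and> s \<in> e \<and> cored E s \<and> x s \<noteq> 0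
            \<longrightarrow> x i * x j < 0)"
proof -
  note prod_I = eigenpair_prod_intersectional[OF assms(3,1,2,4) _ assms(6)]
  have neg: "(1 - lam) * x s ^ 2 < 0" if "x s \<noteq> 0" for s
    using assms(5) that by (simp add: mult_neg_pos)
  show ?thesis
  proof (intro conjI allI impI)
    fix i s assume "{v\<in>e. intersectional E v} = {i} \<and> s \<in> e \<and> cored E s \<and> x s \<noteq> 0"
    then have "x i = (1 - lam) * x s" "x s \<noteq> 0" using prod_I[of s] assms(5) by auto
    then show "x i * x s < 0" using neg by (simp add: power2_eq_square mult.assoc)
  next
    fix i j s assume "{v\<in>e. intersectional E v} = {i, j} \<and> i \<noteq> j \<and> s \<in> e \<and> cored E s \<and> x s \<noteq> 0"
    then have "x i * x j = (1 - lam) * (x s * x s)" "x s \<noteq> 0" using prod_I[of s] assms(5) by auto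
    then show "x i * x j < 0" using neg by (simp add: power2_eq_square)
  qed
qed

end
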